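(* Let $n,k,t$ be positive integers with $k>t>0$, $n>2k-t$ and $n<(t+1)(k+1-t)$. Then $$\operatorname{tw}(K(n,k,t))< \binom{n}{k}-\binom{n-t}{k-t}-1.$$
   Context: For integers $k>t\ge 1$ and $n>2k-t$, the generalized Kneser graph $K(n,k,t)$ is the graph whose vertices are the $k$-element subsets of $[n]=\{1,\dots,n\}$, two vertices $K,K'$ being adjacent if and only if $|K\cap K'|<t$. A tree decomposition of a graph $\Gamma$ is a pair $(T,(B_x)_{x\in V(T)})$ where $T$ is a tree and each $B_x\subseteq V(\Gamma)$, such that every edge of $\Gamma$ is contained in some $B_x$, and for each vertex $v$ of $\Gamma$ the set $\{x\in V(T): v\in B_x\}$ is non-empty and induces a connected subgraph of $T$. Its width is $\max_x |B_x|-1$, and the treewidth $\operatorname{tw}(\Gamma)$ is the minimum width of a tree decomposition of $\Gamma$. *)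

theory Defs
  imports Main
begin

definition is_graph :: "'a set \<Rightarrow> 'a set set \<Rightarrow> bool" where
  "is_graph V E \<longleftrightarrow> (\<forall>e\<in>E. e \<subseteq> V \<and> card e = 2)"

definition induced_connected :: "'a set \<Rightarrow> 'a set set \<Rightarrow> bool" where
  "induced_connected S E \<longleftrightarrow>
     (\<forall>x\<in>S. \<forall>y\<in>S. (x, y) \<in> ({(u, v). u \<in> S \<and> v \<in> S \<and> {u, v} \<in> E})\<^sup>*)"

definition is_tree :: "'a set \<Rightarrow> 'a set set \<Rightarrow> bool" where
  "is_tree V E \<longleftrightarrow> finite V \<and> V \<noteq> {} \<and> is_graph V E \<and> induced_connected V E
     \<and> card E + 1 = card V"

definition is_tree_decomposition ::
  "'a set \<Rightarrow> 'a set set \<Rightarrow> 'b set \<Rightarrow> 'b set set \<Rightarrow> ('b \<Rightarrow> 'a set) \<Rightarrow> bool" where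
  "is_tree_decomposition V E TV TE B \<longleftrightarrow>
     is_tree TV TE \<and> (\<forall>x\<in>TV. B x \<subseteq> V) \<and>
     (\<forall>e\<in>E. \<exists>x\<in>TV. e \<subseteq> B x) \<and>
     (\<forall>v\<in>V. {x\<in>TV. v \<in> B x} \<noteq> {} \<and> induced_connected {x\<in>TV. v \<in> B x} TE)"

definition td_width :: "'b set \<Rightarrow> ('b \<Rightarrow> 'a set) \<Rightarrow> nat" where
  "td_width TV B = Max ((\<lambda>x. card (B x)) ` TV) - 1"

text \<open>Treewidth of a finite graph; tree nodes are indexed by natural numbers
  (no loss of generality, since trees are finite).\<close>
definition treewidth :: "'a set \<Rightarrow> 'a set set \<Rightarrow> nat" where
  "treewidth V E = (LEAST w. \<exists>(TV :: nat set) TE B.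
      is_tree_decomposition V E TV TE B \<and> td_width TV B = w)"

definition kneser_vertices :: "nat \<Rightarrow> nat \<Rightarrow> nat set set" where
  "kneser_vertices n k = {K. K \<subseteq> {1..n} \<and> card K = k}"

definition kneser_edges :: "nat \<Rightarrow> nat \<Rightarrow> nat \<Rightarrow> nat set set set" where
  "kneser_edges n k t = {{K, K'} | K K'. K \<in> kneser_vertices n k \<and> K' \<in> kneser_vertices n k
      \<and> K \<noteq> K' \<and> card (K \<inter> K') < t}"

end

theory Submission
  imports Defs
begin

text \<open>Let F be Frankl's family of k-subsets of [n] meeting [t+2] in at least t+1 points.
  Any two members of F share at least t points of [t+2], so F is an independent set of K(n,k,t);
  and as n \<ge> k+2, each member of F can trade points of [t+2] for points outside to reach a
  non-neighbour outside F. A star-shaped tree decomposition with centre bag V - F and, for each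
  v \<in> F, the leaf bag {v} \<union> N(v) therefore has width |V - F| - 1. Finally, n < (t+1)(k+1-t) is
  exactly what makes F larger than the trivial t-intersecting family of k-sets containing [t],
  which has C(n-t, k-t) members.\<close>

lemma induced_connected_star:
  assumes "c \<in> S" and "\<forall>x\<in>S. x \<noteq> c \<longrightarrow> {x, c} \<in> E"
  shows "induced_connected S E"
  unfolding induced_connected_def
proof (intro ballI)
  fix x y assume "x \<in> S" "y \<in> S"
  let ?R = "{(u, v). u \<in> S \<and> v \<in> S \<and> {u, v} \<in> E}"
  have to_centre: "(z, c) \<in> ?R\<^sup>*" and from_centre: "(c, z) \<in> ?R\<^sup>*" if "z \<in> S" for z
    using assms that by (cases "z = c"; auto intro!: r_into_rtrancl simp: insert_commute)+
  show "(x, y) \<in> ?R\<^sup>*"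
    using to_centre[OF \<open>x \<in> S\<close>] from_centre[OF \<open>y \<in> S\<close>] by (rule rtrancl_trans)
qed

lemma is_tree_star:
  fixes c :: nat
  shows "is_tree {0..c} ((\<lambda>i. {i, c}) ` {0..<c})"
  unfolding is_tree_def
proof (intro conjI)
  show "is_graph {0..c} ((\<lambda>i. {i, c}) ` {0..<c})"
    by (auto simp: is_graph_def)
  show "induced_connected {0..c} ((\<lambda>i. {i, c}) ` {0..<c})"
    by (rule induced_connected_star[of c]) auto
  have "inj_on (\<lambda>i. {i, c}) {0..<c}"
    by (auto simp: inj_on_def doubleton_eq_iff)
  then show "card ((\<lambda>i. {i, c}) ` {0..<c}) + 1 = card {0..c}"
    by (simp add: card_image)
qed auto

lemma treewidth_le_td_width:
  fixes TV :: "nat set"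
  assumes "is_tree_decomposition V E TV TE B"
  shows "treewidth V E \<le> td_width TV B"
  unfolding treewidth_def using assms by (intro Least_le) blast

lemma is_tree_decomposition_star:
  fixes c :: nat
  assumes "\<forall>i<c. L i \<subseteq> V" and "C \<subseteq> V"
    and "\<forall>e\<in>E. e \<subseteq> C \<or> (\<exists>i<c. e \<subseteq> L i)"
    and "\<forall>v\<in>V. v \<in> C \<or> (\<exists>!i. i < c \<and> v \<in> L i)"
  shows "is_tree_decomposition V E {0..c} ((\<lambda>i. {i, c}) ` {0..<c})
           (\<lambda>x. if x < c then L x else C)"
proof -
  let ?B = "\<lambda>x. if x < c then L x else C"
  let ?TE = "(\<lambda>i. {i, c}) ` {0..<c}"
  have cover: "\<exists>x\<in>{0..c}. e \<subseteq> ?B x" if "e \<in> E" for e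
  proof -
    have "e \<subseteq> C \<or> (\<exists>i<c. e \<subseteq> L i)"
      using assms(3) that by blast
    then show ?thesis
    proof
      assume "e \<subseteq> C"
      then show ?thesis by (intro bexI[of _ c]) auto
    next
      assume "\<exists>i<c. e \<subseteq> L i"
      then obtain i where "i < c" "e \<subseteq> L i" by blast
      then show ?thesis by (intro bexI[of _ i]) auto
    qed
  qed
  have connected: "{x\<in>{0..c}. v \<in> ?B x} \<noteq> {} \<and> induced_connected {x\<in>{0..c}. v \<in> ?B x} ?TE"
    if "v \<in> V" for v
  proof (cases "v \<in> C")
    case True
    then have centre: "c \<in> {x\<in>{0..c}. v \<in> ?B x}"
      by simp
    have "induced_connected {x\<in>{0..c}. v \<in> ?B x} ?TE"
      by (rule induced_connected_star[OF centre]) force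
    with centre show ?thesis
      by blast
  next
    case False
    with assms(4) that have "\<exists>!i. i < c \<and> v \<in> L i"
      by blast
    then obtain i where "i < c" "v \<in> L i" and unique: "\<And>j. j < c \<and> v \<in> L j \<Longrightarrow> j = i"
      by (elim ex1E) blast
    have "{x\<in>{0..c}. v \<in> ?B x} = {i}"
    proof (intro equalityI subsetI)
      fix x assume "x \<in> {x\<in>{0..c}. v \<in> ?B x}"
      with False have "x < c \<and> v \<in> L x"
        by (auto split: if_splits)
      then show "x \<in> {i}"
        using unique by blast
    qed (use \<open>i < c\<close> \<open>v \<in> L i\<close> in auto)
    then show ?thesis
      using induced_connected_star[of i "{i}"] by simp
  qed
  show ?thesis
    unfolding is_tree_decomposition_def
    using is_tree_star cover connected assms(1,2) by auto
qed

lemma treewidth_less_card_diff_independent: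
  fixes V :: "'a set"
  assumes "finite V" and "is_graph V E" and "I \<subseteq> V" and "I \<noteq> {}"
    and independent: "\<forall>e\<in>E. \<not> e \<subseteq> I"
    and non_neighbour: "\<forall>v\<in>I. \<exists>u\<in>V - I. {v, u} \<notin> E"
  shows "treewidth V E < card (V - I)"
proof -
  define c where "c = card I"
  obtain h where h: "bij_betw h {0..<c} I"
    using ex_bij_betw_nat_finite finite_subset[OF \<open>I \<subseteq> V\<close> \<open>finite V\<close>] c_def by blast
  define N where "N v = {u. {v, u} \<in> E}" for v
  define L where "L i = insert (h i) (N (h i))" for i
  have hI: "h i \<in> I" if "i < c" for i
    using h that by (auto simp: bij_betw_def)
  have N_outside: "N v \<subseteq> V - I" if "v \<in> I" for v
  proof
    fix u assume "u \<in> N v"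
    then have "{v, u} \<in> E"
      by (simp add: N_def)
    then show "u \<in> V - I"
      using assms(2) independent that by (auto simp: is_graph_def)
  qed
  have cover: "e \<subseteq> V - I \<or> (\<exists>i<c. e \<subseteq> L i)" if "e \<in> E" for e
  proof -
    obtain x y where e: "e = {x, y}"
      using assms(2) \<open>e \<in> E\<close> by (auto simp: is_graph_def card_2_iff)
    have covered_at: "\<exists>i<c. e \<subseteq> L i" if "z \<in> I" "e = {z, w}" for z w
    proof -
      obtain i where "i < c" "h i = z"
        using h \<open>z \<in> I\<close> by (auto simp: bij_betw_def)
      then show ?thesis
        using \<open>e \<in> E\<close> that(2) by (auto simp: L_def N_def)
    qed
    show ?thesis
      using covered_at[of x y] covered_at[of y x] e assms(2) \<open>e \<in> E\<close>
      by (auto simp: is_graph_def insert_commute)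
  qed
  have unique_leaf: "\<exists>!i. i < c \<and> v \<in> L i" if "v \<in> I" for v
  proof -
    have "v \<in> L i \<longleftrightarrow> h i = v" if "i < c" for i
      using N_outside[OF hI[OF that]] \<open>v \<in> I\<close> by (auto simp: L_def)
    moreover have "\<exists>!i. i \<in> {0..<c} \<and> h i = v"
      using h \<open>v \<in> I\<close> by (auto simp: bij_betw_def inj_on_def)
    ultimately show ?thesis
      by auto
  qed
  have td: "is_tree_decomposition V E {0..c} ((\<lambda>i. {i, c}) ` {0..<c})
              (\<lambda>x. if x < c then L x else V - I)"
    by (rule is_tree_decomposition_star)
      (use hI N_outside cover unique_leaf \<open>I \<subseteq> V\<close> in \<open>auto simp: L_def\<close>)
  have leaf_card: "card (L i) \<le> card (V - I)" if "i < c" for i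
  proof -
    obtain u where "u \<in> V - I" "{h i, u} \<notin> E"
      using non_neighbour hI[OF \<open>i < c\<close>] by blast
    then have "N (h i) \<subseteq> (V - I) - {u}"
      using N_outside hI[OF \<open>i < c\<close>] by (auto simp: N_def)
    then have "card (N (h i)) \<le> card (V - I) - 1"
      using \<open>u \<in> V - I\<close> \<open>finite V\<close> by (metis card_Diff_singleton card_mono finite_Diff)
    moreover have "card (V - I) \<ge> 1"
      using \<open>u \<in> V - I\<close> \<open>finite V\<close> by (metis One_nat_def Suc_leI card_gt_0_iff empty_iff finite_Diff)
    ultimately show ?thesis
      by (simp add: L_def card_insert_le_m1)
  qed
  have "Max ((\<lambda>x. card (if x < c then L x else V - I)) ` {0..c}) \<le> card (V - I)"
    using leaf_card by (auto intro: Max.boundedI)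
  moreover have "card (V - I) \<noteq> 0"
    using non_neighbour \<open>I \<noteq> {}\<close> \<open>finite V\<close> by auto
  ultimately have "td_width {0..c} (\<lambda>x. if x < c then L x else V - I) < card (V - I)"
    unfolding td_width_def by linarith
  then show ?thesis
    using treewidth_le_td_width[OF td] by linarith
qed

lemma card_subsets_with_trace:
  assumes "finite U" and "S \<subseteq> U" and "T \<subseteq> S" and "card T \<le> k"
  shows "card {K. K \<subseteq> U \<and> card K = k \<and> K \<inter> S = T} = card (U - S) choose (k - card T)"
proof -
  let ?X = "{K. K \<subseteq> U \<and> card K = k \<and> K \<inter> S = T}"
  let ?Y = "{L. L \<subseteq> U - S \<and> card L = k - card T}"
  have "finite T"
    using assms(1-3) by (meson finite_subset)
  have "bij_betw (\<lambda>K. K - T) ?X ?Y"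
  proof (rule bij_betw_byWitness[where f' = "\<lambda>L. L \<union> T"])
    show "\<forall>K\<in>?X. K - T \<union> T = K" and "\<forall>L\<in>?Y. L \<union> T - T = L"
      using assms(3) by blast+
    show "(\<lambda>K. K - T) ` ?X \<subseteq> ?Y"
    proof
      fix L assume "L \<in> (\<lambda>K. K - T) ` ?X"
      then obtain K where K: "K \<subseteq> U" "card K = k" "K \<inter> S = T" "L = K - T"
        by blast
      then have "card L = k - card T"
        using \<open>finite U\<close> by (metis card_Diff_subset finite_subset inf_le1)
      moreover have "L \<subseteq> U - S"
        using K by blast
      ultimately show "L \<in> ?Y"
        by blast
    qed
    show "(\<lambda>L. L \<union> T) ` ?Y \<subseteq> ?X"
    proof
      fix K assume "K \<in> (\<lambda>L. L \<union> T) ` ?Y"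
      then obtain L where L: "L \<subseteq> U - S" "card L = k - card T" "K = L \<union> T"
        by blast
      have "finite L"
        using L(1) \<open>finite U\<close> by (meson finite_Diff finite_subset)
      moreover have "L \<inter> T = {}"
        using L(1) assms(3) by blast
      ultimately have "card K = k"
        using L(2,3) assms(4) \<open>finite T\<close> by (simp add: card_Un_disjoint)
      moreover have "K \<subseteq> U" and "K \<inter> S = T"
        using L(1,3) assms(2,3) by blast+
      ultimately show "K \<in> ?X"
        by blast
    qed
  qed
  then have "card ?X = card ?Y"
    by (rule bij_betw_same_card)
  also have "\<dots> = card (U - S) choose (k - card T)"
    using \<open>finite U\<close> by (simp add: n_subsets)
  finally show ?thesis .
qed

lemma card_traces_le_card_Int:
  assumes "finite S" and "finite v"
  shows "card (v \<inter> S) + card (w \<inter> S) \<le> card S + card (v \<inter> w)"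
proof -
  have "card (v \<inter> S) + card (w \<inter> S) = card (v \<inter> S \<union> w \<inter> S) + card (v \<inter> S \<inter> (w \<inter> S))"
    using assms by (intro card_Un_Int) auto
  moreover have "card (v \<inter> S \<union> w \<inter> S) \<le> card S"
    using assms by (intro card_mono) auto
  moreover have "card (v \<inter> S \<inter> (w \<inter> S)) \<le> card (v \<inter> w)"
    using assms by (intro card_mono) auto
  ultimately show ?thesis
    by linarith
qed

lemma exists_subset_exchanging_trace:
  assumes "finite U" and "v \<subseteq> U" and "j \<le> card (v \<inter> S)" and "j \<le> card (U - (v \<union> S))"
  shows "\<exists>u\<subseteq>U. card u = card v \<and> card (u \<inter> S) = card (v \<inter> S) - j \<and> card (u \<inter> v) = card v - j"
proof -
  have "finite v"
    using assms(2,1) by (rule finite_subset)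
  obtain D where D: "D \<subseteq> v \<inter> S" "card D = j"
    using obtain_subset_with_card_n[OF assms(3)] by blast
  obtain A where A: "A \<subseteq> U - (v \<union> S)" "card A = j"
    using obtain_subset_with_card_n[OF assms(4)] by blast
  have "finite D" "finite A"
    using D A \<open>finite v\<close> \<open>finite U\<close> by (meson finite_Diff finite_Int finite_subset)+
  define u where "u = (v - D) \<union> A"
  have "j \<le> card v"
    using assms(3) \<open>finite v\<close> by (meson card_mono inf_le1 le_trans)
  have "card u = card (v - D) + card A"
    using A \<open>finite v\<close> \<open>finite A\<close> by (auto simp: u_def intro: card_Un_disjoint)
  also have "\<dots> = card v"
    using D A \<open>finite D\<close> \<open>j \<le> card v\<close> by (simp add: card_Diff_subset)
  finally have "card u = card v" .
  moreover have "card (u \<inter> S) = card (v \<inter> S) - j"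
  proof -
    have "u \<inter> S = (v \<inter> S) - D"
      using D A by (auto simp: u_def)
    then show ?thesis
      using D \<open>finite D\<close> by (simp add: card_Diff_subset)
  qed
  moreover have "card (u \<inter> v) = card v - j"
  proof -
    have "u \<inter> v = v - D"
      using D A by (auto simp: u_def)
    then show ?thesis
      using D \<open>finite D\<close> by (simp add: card_Diff_subset)
  qed
  moreover have "u \<subseteq> U"
    using assms(2) A by (auto simp: u_def)
  ultimately show ?thesis
    by blast
qed

lemma Suc_times_binomial_Suc_eq: "Suc j * (m choose Suc j) = (m - j) * (m choose j)"
proof (cases m)
  case (Suc m')
  have "Suc j * (Suc m' choose Suc j) = Suc m' * (m' choose j)"
    by (rule Suc_times_binomial)
  also have "\<dots> = (Suc m' - j) * (Suc m' choose j)"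
    using binomial_absorb_comp[of "Suc m'" j] by simp
  finally show ?thesis
    using Suc by simp
qed simp

lemma binomial_Suc_less_mult:
  assumes "j \<le> m" and "m - j < a * Suc j"
  shows "m choose Suc j < a * (m choose j)"
proof -
  have "Suc j * (m choose Suc j) = (m - j) * (m choose j)"
    by (rule Suc_times_binomial_Suc_eq)
  also have "\<dots> < (a * Suc j) * (m choose j)"
    using assms by simp
  finally have "Suc j * (m choose Suc j) < Suc j * (a * (m choose j))"
    by (simp only: ac_simps)
  then show ?thesis
    using mult_less_cancel1 by blast
qed

lemma finite_kneser_vertices: "finite (kneser_vertices n k)"
  unfolding kneser_vertices_def by (rule finite_subset[of _ "Pow {1..n}"]) auto

lemma card_kneser_vertices: "card (kneser_vertices n k) = n choose k"
  using n_subsets[of "{1..n}" k] by (simp add: kneser_vertices_def)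

lemma is_graph_kneser: "is_graph (kneser_vertices n k) (kneser_edges n k t)"
  unfolding is_graph_def kneser_edges_def by (auto simp: card_2_iff)

lemma kneser_edge_card_Int:
  assumes "{v, u} \<in> kneser_edges n k t"
  shows "card (v \<inter> u) < t"
proof -
  obtain K K' where "{v, u} = {K, K'}" "card (K \<inter> K') < t"
    using assms by (auto simp: kneser_edges_def)
  then show ?thesis
    by (auto simp: doubleton_eq_iff Int_commute)
qed

lemma card_kneser_vertices_with_trace:
  assumes "S \<subseteq> {1..n}" and "T \<subseteq> S" and "card T \<le> k"
  shows "card {K \<in> kneser_vertices n k. K \<inter> S = T} = (n - card S) choose (k - card T)"
  using card_subsets_with_trace[of "{1..n}" S T k] assms
  by (simp add: kneser_vertices_def card_Diff_subset finite_subset conj_assoc)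

definition frankl_family :: "nat \<Rightarrow> nat \<Rightarrow> nat \<Rightarrow> nat set set" where
  "frankl_family n k t = {K \<in> kneser_vertices n k. t + 1 \<le> card (K \<inter> {1..t + 2})}"

lemma frankl_family_independent:
  assumes "e \<in> kneser_edges n k t"
  shows "\<not> e \<subseteq> frankl_family n k t"
proof
  assume "e \<subseteq> frankl_family n k t"
  moreover obtain K K' where "e = {K, K'}" "card (K \<inter> K') < t"
    using assms by (auto simp: kneser_edges_def)
  ultimately have "K \<in> frankl_family n k t" "K' \<in> frankl_family n k t"
    by auto
  then have "t + 1 + (t + 1) \<le> card {1..t + 2} + card (K \<inter> K')"
    using card_traces_le_card_Int[of "{1..t + 2}" K K']
    by (auto simp: frankl_family_def kneser_vertices_def finite_subset)
  with \<open>card (K \<inter> K') < t\<close> show False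
    by simp
qed

lemma frankl_family_non_neighbour:
  assumes "t \<le> k" and "k + 2 \<le> n" and "v \<in> frankl_family n k t"
  shows "\<exists>u\<in>kneser_vertices n k - frankl_family n k t. {v, u} \<notin> kneser_edges n k t"
proof -
  let ?S = "{1..t + 2}"
  define d where "d = card (v \<inter> ?S)"
  have v: "v \<subseteq> {1..n}" "card v = k" and "t + 1 \<le> d"
    using assms(3) by (auto simp: frankl_family_def kneser_vertices_def d_def)
  have "finite v"
    using v(1) finite_subset by blast
  then have "d \<le> k"
    using v(2) by (metis card_mono d_def inf_le1)
  have "card (v \<union> ?S) + d = k + (t + 2)"
    using card_Un_Int[OF \<open>finite v\<close>, of ?S] v(2) by (simp add: d_def)
  moreover have "v \<union> ?S \<subseteq> {1..n}"
    using v(1) assms(1,2) by auto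
  ultimately have "d - t \<le> card ({1..n} - (v \<union> ?S))"
    using assms(2) \<open>t + 1 \<le> d\<close> by (simp add: card_Diff_subset \<open>finite v\<close>)
  then obtain u where u: "u \<subseteq> {1..n}" "card u = k" "card (u \<inter> ?S) = t"
    and "card (u \<inter> v) = k - (d - t)"
    using exists_subset_exchanging_trace[of "{1..n}" v "d - t" ?S] v \<open>t + 1 \<le> d\<close>
    by (auto simp: d_def)
  then have "t \<le> card (v \<inter> u)"
    using \<open>d \<le> k\<close> \<open>t + 1 \<le> d\<close> by (simp add: Int_commute)
  then have "{v, u} \<notin> kneser_edges n k t"
    using kneser_edge_card_Int by fastforce
  moreover have "u \<in> kneser_vertices n k - frankl_family n k t"
    using u by (simp add: frankl_family_def kneser_vertices_def)
  ultimately show ?thesis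
    by blast
qed

text \<open>The k-sets containing [t] whose trace on [t+2] is not exactly [t] lie in F, and so do the
  k-sets with trace [t+2] - {a} for a \<in> [t], which do not contain [t].\<close>

lemma card_frankl_family_ge:
  assumes "t < k" and "t + 2 \<le> n"
  shows "((n - t) choose (k - t)) + t * ((n - (t + 2)) choose (k - (t + 1)))
           \<le> card (frankl_family n k t) + ((n - (t + 2)) choose (k - t))"
proof -
  let ?V = "kneser_vertices n k" and ?S = "{1..t + 2}" and ?m = "n - (t + 2)"
  define A where "A = {K \<in> ?V. K \<inter> {1..t} = {1..t}}"
  define B where "B = {K \<in> ?V. K \<inter> ?S = {1..t}}"
  define G where "G a = {K \<in> ?V. K \<inter> ?S = ?S - {a}}" for a
  have card_A: "card A = (n - t) choose (k - t)"
    unfolding A_def using card_kneser_vertices_with_trace[of "{1..t}" n "{1..t}" k] assms by simp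
  have card_B: "card B = ?m choose (k - t)"
    unfolding B_def using card_kneser_vertices_with_trace[of ?S n "{1..t}" k] assms by simp
  have card_G: "card (G a) = ?m choose (k - (t + 1))" if "a \<in> {1..t}" for a
    unfolding G_def using card_kneser_vertices_with_trace[of ?S n "?S - {a}" k] assms that by simp
  have initial_segment: "{1..t} \<subseteq> ?S"
    by simp
  then have "B \<subseteq> A"
    unfolding A_def B_def by blast
  have card_UG: "card (\<Union>a\<in>{1..t}. G a) = t * (?m choose (k - (t + 1)))"
  proof -
    have "card (\<Union>a\<in>{1..t}. G a) = (\<Sum>a\<in>{1..t}. card (G a))"
    proof (rule card_UN_disjoint)
      show "\<forall>a\<in>{1..t}. finite (G a)"
        using finite_kneser_vertices by (simp add: G_def)
      show "\<forall>a\<in>{1..t}. \<forall>b\<in>{1..t}. a \<noteq> b \<longrightarrow> G a \<inter> G b = {}"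
        using initial_segment unfolding G_def by blast
    qed simp
    then show ?thesis
      using card_G by simp
  qed
  have finite: "finite (A - B)" "finite (\<Union>a\<in>{1..t}. G a)" "finite (frankl_family n k t)"
    using finite_kneser_vertices by (auto simp: A_def G_def frankl_family_def)
  have "(A - B) \<union> (\<Union>a\<in>{1..t}. G a) \<subseteq> frankl_family n k t"
  proof -
    have "{1..t} \<subset> K \<inter> ?S" if "K \<in> A - B" for K
      using that initial_segment unfolding A_def B_def by blast
    then have "t < card (K \<inter> ?S)" if "K \<in> A - B" for K
      using psubset_card_mono[of "K \<inter> ?S" "{1..t}"] that by simp
    moreover have "card (?S - {a}) = t + 1" if "a \<in> {1..t}" for a
      using that by simp
    ultimately show ?thesis
      by (force simp: frankl_family_def A_def G_def)
  qed
  then have "card ((A - B) \<union> (\<Union>a\<in>{1..t}. G a)) \<le> card (frankl_family n k t)"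
    using finite(3) by (rule card_mono[rotated])
  moreover have "card ((A - B) \<union> (\<Union>a\<in>{1..t}. G a)) = card (A - B) + card (\<Union>a\<in>{1..t}. G a)"
    using finite(1,2) by (rule card_Un_disjoint) (auto simp: A_def G_def)
  moreover have "card (A - B) + card B = card A"
  proof -
    have "finite A"
      using finite_kneser_vertices by (simp add: A_def)
    then show ?thesis
      using \<open>B \<subseteq> A\<close> by (metis card_Diff_subset card_mono finite_subset le_add_diff_inverse2)
  qed
  ultimately show ?thesis
    using card_A card_B card_UG by linarith
qed

lemma card_frankl_family_gt:
  assumes "0 < t" and "t < k" and "k < n" and "n < (t + 1) * (k + 1 - t)"
  shows "(n - t) choose (k - t) < card (frankl_family n k t)"
proof -
  let ?m = "n - (t + 2)"
  obtain d where "k = t + d"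
    using assms(2) less_imp_add_positive by blast
  then have "(t + 1) * (k + 1 - t) = t * (k - t) + k + 1"
    by (simp add: algebra_simps)
  moreover have "0 < t * (k - t)"
    using assms(1,2) by simp
  ultimately have "n - Suc k < t * (k - t)"
    using assms(4) by linarith
  then have "?m - (k - (t + 1)) < t * Suc (k - (t + 1))"
    using assms(2,3) by (simp add: Suc_diff_Suc)
  then have "?m choose (k - t) < t * (?m choose (k - (t + 1)))"
    using binomial_Suc_less_mult[of "k - (t + 1)" ?m t] assms(2,3) by (simp add: Suc_diff_Suc)
  then show ?thesis
    using card_frankl_family_ge[of t k n] assms(2,3) by linarith
qed

theorem mainTheorem2:
  fixes n k t :: nat
  assumes "0 < t" and "t < k" and "2 * k - t < n" and "n < (t + 1) * (k + 1 - t)"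
  shows "int (treewidth (kneser_vertices n k) (kneser_edges n k t))
           < int (n choose k) - int ((n - t) choose (k - t)) - 1"
proof -
  let ?V = "kneser_vertices n k" and ?F = "frankl_family n k t"
  have "k + 2 \<le> n"
    using assms(2,3) by linarith
  have larger: "(n - t) choose (k - t) < card ?F"
    using card_frankl_family_gt assms \<open>k + 2 \<le> n\<close> by simp
  have "?F \<subseteq> ?V"
    by (auto simp: frankl_family_def)
  then have "treewidth ?V (kneser_edges n k t) < card (?V - ?F)"
    using larger finite_kneser_vertices is_graph_kneser frankl_family_independent
      frankl_family_non_neighbour[OF less_imp_le[OF assms(2)] \<open>k + 2 \<le> n\<close>]
    by (intro treewidth_less_card_diff_independent) auto
  moreover have "card (?V - ?F) = (n choose k) - card ?F"
    using \<open>?F \<subseteq> ?V\<close> finite_kneser_vertices card_kneser_vertices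
    by (metis card_Diff_subset finite_subset)
  ultimately show ?thesis
    using larger by linarith
qed

end
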